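(* Let $G$ be an edge-maximal $K_{3,3}$-minor free graph of order $n\geq 1186$ with $\Delta(G)=n-1$ and $\Delta'(G)\leq n-2$. Then $q(G)\leq n+2$.
   Context: All graphs are finite, simple and undirected. $q(G)$ is the largest eigenvalue of the signless Laplacian matrix $Q(G)=D(G)+A(G)$. $\Delta(G)$ is the maximum degree of $G$, and $\Delta'(G)$ is the second largest degree: $\Delta'(G)=\max\{d(u): u\in V(G)\setminus\{v\}\}$ where $v$ is a vertex with $d(v)=\Delta(G)$. A graph $H$ is a minor of $G$ if $H$ can be obtained from $G$ by deleting edges, contracting edges, or deleting vertices; $G$ is $H$-minor free if it has no minor isomorphic to $H$. $G$ is edge-maximal $H$-minor free if $G$ is $H$-minor free and adding any edge joining two nonadjacent vertices of $G$ produces a graph having $H$ as a minor. $K_{3,3}$ is the complete bipartite graph with both parts of size 3. *)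

theory Defs
  imports Complex_Main
begin

type_synonym 'a graph = "'a set \<times> 'a set set"

definition verts :: "'a graph \<Rightarrow> 'a set" where "verts G = fst G"
definition edges :: "'a graph \<Rightarrow> 'a set set" where "edges G = snd G"

definition simple_graph :: "'a graph \<Rightarrow> bool" where
  "simple_graph G \<longleftrightarrow> finite (verts G) \<and>
     (\<forall>e\<in>edges G. \<exists>u v. u \<noteq> v \<and> u \<in> verts G \<and> v \<in> verts G \<and> e = {u, v})"

definition nbrs :: "'a graph \<Rightarrow> 'a \<Rightarrow> 'a set" where
  "nbrs G v = {w \<in> verts G. {v, w} \<in> edges G}"

definition deg :: "'a graph \<Rightarrow> 'a \<Rightarrow> nat" where
  "deg G v = card (nbrs G v)"

definition max_degree :: "'a graph \<Rightarrow> nat" where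
  "max_degree G = Max (deg G ` verts G)"

definition second_max_degree :: "'a graph \<Rightarrow> nat" where
  "second_max_degree G =
     (let v = (SOME v. v \<in> verts G \<and> deg G v = max_degree G)
      in Max (deg G ` (verts G - {v})))"

text \<open>Eigenvalues of the signless Laplacian Q(G) = D(G) + A(G), acting on
real vectors indexed by V(G); q(G) is the largest one.\<close>
definition Q_eigenvalue :: "'a graph \<Rightarrow> real \<Rightarrow> bool" where
  "Q_eigenvalue G \<mu> \<longleftrightarrow> (\<exists>x :: 'a \<Rightarrow> real. (\<exists>v\<in>verts G. x v \<noteq> 0) \<and>
     (\<forall>v\<in>verts G. real (deg G v) * x v + (\<Sum>w\<in>nbrs G v. x w) = \<mu> * x v))"

definition signless_q :: "'a graph \<Rightarrow> real" where
  "signless_q G = Max {\<mu>. Q_eigenvalue G \<mu>}"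

inductive minor_step :: "'a graph \<Rightarrow> 'a graph \<Rightarrow> bool" where
  del_edge: "e \<in> edges G \<Longrightarrow> minor_step G (verts G, edges G - {e})"
| del_vertex: "v \<in> verts G \<Longrightarrow>
     minor_step G (verts G - {v}, {e \<in> edges G. v \<notin> e})"
| contract: "{u, v} \<in> edges G \<Longrightarrow> u \<noteq> v \<Longrightarrow>
     minor_step G (verts G - {v},
       {e \<in> edges G. v \<notin> e} \<union> {{u, w} | w. {v, w} \<in> edges G \<and> w \<noteq> u})"

definition graph_iso :: "'a graph \<Rightarrow> 'b graph \<Rightarrow> bool" where
  "graph_iso G H \<longleftrightarrow> (\<exists>f. bij_betw f (verts G) (verts H) \<and>
     (\<forall>x\<in>verts G. \<forall>y\<in>verts G. {x, y} \<in> edges G \<longleftrightarrow> {f x, f y} \<in> edges H))"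

definition has_minor :: "'a graph \<Rightarrow> 'b graph \<Rightarrow> bool" where
  "has_minor G H \<longleftrightarrow> (\<exists>G'. minor_step\<^sup>*\<^sup>* G G' \<and> graph_iso G' H)"

definition minor_free :: "'a graph \<Rightarrow> 'b graph \<Rightarrow> bool" where
  "minor_free G H \<longleftrightarrow> \<not> has_minor G H"

definition edge_maximal_minor_free :: "'a graph \<Rightarrow> 'b graph \<Rightarrow> bool" where
  "edge_maximal_minor_free G H \<longleftrightarrow> minor_free G H \<and>
     (\<forall>u\<in>verts G. \<forall>v\<in>verts G. u \<noteq> v \<and> {u, v} \<notin> edges G \<longrightarrow>
        has_minor (verts G, insert {u, v} (edges G)) H)"

definition K33 :: "nat graph" where
  "K33 = ({0..5}, {{i, j} | i j. i < 3 \<and> 3 \<le> j \<and> j \<le> 5})"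

end

theory Submission
  imports Defs "Jordan_Normal_Form.Spectral_Radius"
begin

text \<open>Let v be a vertex of degree n - 1. Since G has no K_{3,3} minor, no three vertices
have three common neighbours, so two vertices other than v share at most two neighbours
besides v. Hence either some u \<noteq> v has degree at least 11n/12, and then every other
vertex has degree at most n/12 + 3, or at most four vertices other than v have degree
above n/4. In either case we exhibit positive weights p with (Q p)(w) \<le> (n + 2) p(w) for
every vertex w, which bounds every eigenvalue of Q by n + 2. The weight of v is one third
of the total weight of the other vertices; the other weights are 1, except for 4n/11 on u
in the first case and 17 on the (at most four) vertices of large degree in the second.\<close>

lemma finite_verts: "simple_graph G \<Longrightarrow> finite (verts G)"
  by (simp add: simple_graph_def)

lemma nbrs_subset_verts: "nbrs G w \<subseteq> verts G"
  by (auto simp: nbrs_def)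

lemma finite_nbrs: "simple_graph G \<Longrightarrow> finite (nbrs G w)"
  using finite_verts nbrs_subset_verts finite_subset by metis

lemma deg_le_card_verts: "simple_graph G \<Longrightarrow> deg G w \<le> card (verts G)"
  unfolding deg_def by (rule card_mono[OF finite_verts nbrs_subset_verts])

lemma not_in_own_nbrs: "simple_graph G \<Longrightarrow> w \<notin> nbrs G w"
  by (auto simp: simple_graph_def nbrs_def doubleton_eq_iff)

lemma nbrs_sym: "u \<in> nbrs G w \<Longrightarrow> w \<in> verts G \<Longrightarrow> w \<in> nbrs G u"
  by (auto simp: nbrs_def insert_commute)

lemma finite_edges: "simple_graph G \<Longrightarrow> finite (edges G)"
  by (rule finite_subset[of _ "Pow (verts G)"]) (auto simp: simple_graph_def)

lemma nbrs_eq_if_deg_eq: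
  assumes "simple_graph G" "v \<in> verts G" "deg G v = card (verts G) - 1"
  shows "nbrs G v = verts G - {v}"
proof (rule card_subset_eq)
  show "finite (verts G - {v})" using assms(1) finite_verts by blast
  show "nbrs G v \<subseteq> verts G - {v}"
    using nbrs_subset_verts[of G v] not_in_own_nbrs[OF assms(1), of v] by blast
  show "card (nbrs G v) = card (verts G - {v})"
    using assms finite_verts[OF assms(1)] by (simp add: deg_def)
qed

lemma sum_nbrs_swap:
  assumes "finite (verts G)"
  shows "(\<Sum>w\<in>verts G. \<Sum>u\<in>nbrs G w. f w u) = (\<Sum>u\<in>verts G. \<Sum>w\<in>nbrs G u. f w u)"
proof -
  have "(\<Sum>w\<in>verts G. \<Sum>u\<in>nbrs G w. f w u)
      = (\<Sum>w\<in>verts G. \<Sum>u\<in>verts G. if {w, u} \<in> edges G then f w u else 0)"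
    by (rule sum.cong[OF refl]) (simp add: sum.If_cases assms nbrs_def Int_def)
  also have "\<dots> = (\<Sum>u\<in>verts G. \<Sum>w\<in>verts G. if {w, u} \<in> edges G then f w u else 0)"
    by (rule sum.swap)
  also have "\<dots> = (\<Sum>u\<in>verts G. \<Sum>w\<in>nbrs G u. f w u)"
    by (rule sum.cong[OF refl]) (simp add: sum.If_cases assms nbrs_def Int_def insert_commute)
  finally show ?thesis .
qed

lemma max_degree_attained:
  assumes "finite (verts G)" "verts G \<noteq> {}"
  shows "\<exists>v. v \<in> verts G \<and> deg G v = max_degree G"
proof -
  have "max_degree G \<in> deg G ` verts G"
    unfolding max_degree_def using assms by (intro Max_in) auto
  then show ?thesis by force
qed

lemma deg_le_second_max_degree:
  assumes "finite (verts G)" "w \<in> verts G"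
    and "w \<noteq> (SOME v. v \<in> verts G \<and> deg G v = max_degree G)"
  shows "deg G w \<le> second_max_degree G"
  unfolding second_max_degree_def Let_def using assms by (intro Max_ge) auto

section \<open>The largest eigenvalue of the signless Laplacian\<close>

definition Q_eigenfunction :: "'a graph \<Rightarrow> 'b::comm_ring_1 \<Rightarrow> ('a \<Rightarrow> 'b) \<Rightarrow> bool" where
  "Q_eigenfunction G \<mu> x \<longleftrightarrow> (\<exists>v\<in>verts G. x v \<noteq> 0) \<and>
     (\<forall>v\<in>verts G. of_nat (deg G v) * x v + (\<Sum>w\<in>nbrs G v. x w) = \<mu> * x v)"

lemma Q_eigenvalue_iff: "Q_eigenvalue G \<mu> \<longleftrightarrow> (\<exists>x. Q_eigenfunction G \<mu> x)"
  by (simp add: Q_eigenvalue_def Q_eigenfunction_def)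

text \<open>A Collatz--Wielandt type bound: compare the eigenfunction with p at a vertex
maximising |x|/p.\<close>
lemma Q_eigenvalue_le_weighted_row_sum:
  assumes fin: "finite (verts G)" and ev: "Q_eigenvalue G \<mu>"
    and pos: "\<And>w. w \<in> verts G \<Longrightarrow> p w > 0"
    and row: "\<And>w. w \<in> verts G \<Longrightarrow> real (deg G w) * p w + (\<Sum>u\<in>nbrs G w. p u) \<le> c * p w"
  shows "\<mu> \<le> c"
proof -
  obtain x where nz: "\<exists>v\<in>verts G. x v \<noteq> 0"
    and eq: "\<And>v. v \<in> verts G \<Longrightarrow> real (deg G v) * x v + (\<Sum>w\<in>nbrs G v. x w) = \<mu> * x v"
    using ev unfolding Q_eigenvalue_def by blast
  define r where "r w = \<bar>x w\<bar> / p w" for w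
  have "Max (r ` verts G) \<in> r ` verts G" using fin nz by (intro Max_in) auto
  then obtain w where w: "w \<in> verts G" and w_max: "Max (r ` verts G) = r w" by blast
  have r_max: "r u \<le> r w" if "u \<in> verts G" for u
    using Max_ge[of "r ` verts G" "r u"] fin that w_max by simp
  obtain v where v: "v \<in> verts G" "x v \<noteq> 0" using nz by blast
  have "r v > 0" using v pos unfolding r_def by auto
  then have rw: "r w > 0" using r_max[OF v(1)] by linarith
  have pw: "p w > 0" using pos w by blast
  have nbr_bound: "\<bar>x u\<bar> \<le> r w * p u" if "u \<in> nbrs G w" for u
  proof -
    have u: "u \<in> verts G" using that nbrs_subset_verts[of G w] by blast
    then show ?thesis using r_max[OF u] pos[OF u] unfolding r_def
      by (simp add: divide_le_eq mult.commute)
  qed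
  have "(\<mu> - real (deg G w)) * x w = (\<Sum>u\<in>nbrs G w. x u)"
    using eq[OF w] by (simp add: algebra_simps)
  moreover have "r w * p w = \<bar>x w\<bar>" using pw unfolding r_def by simp
  ultimately have "\<bar>\<mu> - real (deg G w)\<bar> * (r w * p w) = \<bar>\<Sum>u\<in>nbrs G w. x u\<bar>"
    by (metis abs_mult)
  also have "\<dots> \<le> (\<Sum>u\<in>nbrs G w. \<bar>x u\<bar>)" by (rule sum_abs)
  also have "\<dots> \<le> r w * (\<Sum>u\<in>nbrs G w. p u)"
    unfolding sum_distrib_left by (rule sum_mono, rule nbr_bound)
  finally have "\<bar>\<mu> - real (deg G w)\<bar> * p w \<le> (\<Sum>u\<in>nbrs G w. p u)"
    using rw by (simp add: mult.left_commute)
  then have "(\<mu> - real (deg G w)) * p w \<le> (\<Sum>u\<in>nbrs G w. p u)"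
    by (smt (verit) abs_ge_self mult_right_mono pw)
  then have "\<mu> * p w \<le> c * p w" using row[OF w] by (simp add: algebra_simps)
  then show ?thesis using pw by simp
qed

definition Q_entry :: "'a graph \<Rightarrow> 'a \<Rightarrow> 'a \<Rightarrow> 'b::comm_ring_1" where
  "Q_entry G w u = (if w = u then of_nat (deg G w) else if {w, u} \<in> edges G then 1 else 0)"

definition Q_mat :: "'a graph \<Rightarrow> (nat \<Rightarrow> 'a) \<Rightarrow> nat \<Rightarrow> 'b::comm_ring_1 mat" where
  "Q_mat G h n = mat n n (\<lambda>(i, j). Q_entry G (h i) (h j))"

lemma Q_mat_carrier: "Q_mat G h n \<in> carrier_mat n n"
  unfolding Q_mat_def by simp

lemma sum_Q_entry:
  assumes s: "simple_graph G" and w: "w \<in> verts G"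
  shows "(\<Sum>u\<in>verts G. Q_entry G w u * f u) = of_nat (deg G w) * f w + (\<Sum>u\<in>nbrs G w. f u)"
proof -
  have fin: "finite (verts G)" using s finite_verts by blast
  have "(\<Sum>u\<in>verts G - {w}. Q_entry G w u * f u) = (\<Sum>u\<in>verts G - {w}. if {w, u} \<in> edges G then f u else 0)"
    by (rule sum.cong) (auto simp: Q_entry_def)
  also have "\<dots> = (\<Sum>u\<in>{u \<in> verts G - {w}. {w, u} \<in> edges G}. f u)"
    by (rule sum.inter_filter[symmetric]) (use fin in auto)
  also have "{u \<in> verts G - {w}. {w, u} \<in> edges G} = nbrs G w"
    using not_in_own_nbrs[OF s, of w] by (auto simp: nbrs_def)
  finally show ?thesis
    using sum.remove[OF fin w, of "\<lambda>u. Q_entry G w u * f u"] by (simp add: Q_entry_def)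
qed

lemma Q_mat_mult_vec:
  assumes s: "simple_graph G" and h: "bij_betw h {0..<n} (verts G)" and i: "i < n"
  shows "(Q_mat G h n *\<^sub>v vec n (\<lambda>j. f (h j))) $ i
    = of_nat (deg G (h i)) * f (h i) + (\<Sum>u\<in>nbrs G (h i). f u)"
proof -
  have "(Q_mat G h n *\<^sub>v vec n (\<lambda>j. f (h j))) $ i = (\<Sum>j\<in>{0..<n}. Q_entry G (h i) (h j) * f (h j))"
    using i unfolding Q_mat_def by (simp add: scalar_prod_def)
  also have "\<dots> = (\<Sum>u\<in>verts G. Q_entry G (h i) u * f u)"
    using sum.reindex_bij_betw[OF h, of "\<lambda>u. Q_entry G (h i) u * f u"] by simp
  also have "\<dots> = of_nat (deg G (h i)) * f (h i) + (\<Sum>u\<in>nbrs G (h i). f u)"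
    using h i by (intro sum_Q_entry[OF s]) (auto simp: bij_betw_def)
  finally show ?thesis .
qed

lemma eigenvector_Q_mat_iff:
  assumes s: "simple_graph G" and h: "bij_betw h {0..<n} (verts G)"
  shows "eigenvector (Q_mat G h n) (vec n (\<lambda>j. f (h j))) \<mu> \<longleftrightarrow> Q_eigenfunction G \<mu> f"
proof -
  have h_in: "h i \<in> verts G" if "i < n" for i using h that by (auto simp: bij_betw_def)
  have h_onto: "\<exists>i<n. h i = w" if "w \<in> verts G" for w
    using h that by (force simp: bij_betw_def)
  have nonzero: "vec n (\<lambda>j. f (h j)) \<noteq> 0\<^sub>v n \<longleftrightarrow> (\<exists>w\<in>verts G. f w \<noteq> 0)"
    using h_in h_onto by (auto simp: vec_eq_iff)
  have Q_f: "Q_mat G h n *\<^sub>v vec n (\<lambda>j. f (h j))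
      = vec n (\<lambda>i. of_nat (deg G (h i)) * f (h i) + (\<Sum>u\<in>nbrs G (h i). f u))"
    by (rule eq_vecI) (simp add: Q_mat_mult_vec[OF s h], simp add: Q_mat_def)
  then have "Q_mat G h n *\<^sub>v vec n (\<lambda>j. f (h j)) = \<mu> \<cdot>\<^sub>v vec n (\<lambda>j. f (h j))
      \<longleftrightarrow> (\<forall>i<n. of_nat (deg G (h i)) * f (h i) + (\<Sum>u\<in>nbrs G (h i). f u) = \<mu> * f (h i))"
    unfolding Q_f by (auto simp: vec_eq_iff)
  also have "\<dots> \<longleftrightarrow> (\<forall>w\<in>verts G. of_nat (deg G w) * f w + (\<Sum>u\<in>nbrs G w. f u) = \<mu> * f w)"
    using h_in h_onto by blast
  finally have eq: "Q_mat G h n *\<^sub>v vec n (\<lambda>j. f (h j)) = \<mu> \<cdot>\<^sub>v vec n (\<lambda>j. f (h j))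
      \<longleftrightarrow> (\<forall>w\<in>verts G. of_nat (deg G w) * f w + (\<Sum>u\<in>nbrs G w. f u) = \<mu> * f w)" .
  have dim: "dim_row (Q_mat G h n) = n" by (simp add: Q_mat_def)
  show ?thesis
    unfolding eigenvector_def dim Q_eigenfunction_def using nonzero eq vec_carrier by blast
qed

lemma eigenvector_Q_mat_imp_Q_eigenfunction:
  assumes s: "simple_graph G" and h: "bij_betw h {0..<n} (verts G)"
    and ev: "eigenvector (Q_mat G h n) z \<mu>"
  shows "Q_eigenfunction G \<mu> (\<lambda>w. z $ the_inv_into {0..<n} h w)"
proof -
  have z: "z \<in> carrier_vec n"
    using ev by (simp add: eigenvector_def carrier_matD(1)[OF Q_mat_carrier])
  have "z = vec n (\<lambda>j. z $ the_inv_into {0..<n} h (h j))"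
  proof (rule eq_vecI)
    fix i assume "i < dim_vec (vec n (\<lambda>j. z $ the_inv_into {0..<n} h (h j)))"
    then show "z $ i = vec n (\<lambda>j. z $ the_inv_into {0..<n} h (h j)) $ i"
      using the_inv_into_f_f[OF bij_betw_imp_inj_on[OF h]] by simp
  qed (use z in simp)
  with ev show ?thesis
    by (simp only: eigenvector_Q_mat_iff[OF s h, symmetric])
qed

text \<open>k |f|^2 = f* Q f is real because Q is symmetric.\<close>
lemma complex_Q_eigenvalue_real:
  fixes f :: "'a \<Rightarrow> complex"
  assumes s: "simple_graph G" and ev: "Q_eigenfunction G k f"
  shows "Im k = 0"
proof -
  have fin: "finite (verts G)" using s finite_verts by blast
  define T where "T = (\<Sum>w\<in>verts G. (cmod (f w))\<^sup>2)"
  obtain w where w: "w \<in> verts G" "f w \<noteq> 0" using ev by (auto simp: Q_eigenfunction_def)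
  have "0 < (cmod (f w))\<^sup>2" using w by simp
  also have "\<dots> \<le> T" unfolding T_def by (rule member_le_sum) (use w fin in auto)
  finally have T_pos: "T > 0" .
  define C where "C = (\<Sum>w\<in>verts G. \<Sum>u\<in>nbrs G w. cnj (f w) * f u)"
  have "cnj C = (\<Sum>w\<in>verts G. \<Sum>u\<in>nbrs G w. f w * cnj (f u))"
    unfolding C_def by (simp add: cnj_sum)
  also have "\<dots> = (\<Sum>u\<in>verts G. \<Sum>w\<in>nbrs G u. f w * cnj (f u))"
    by (rule sum_nbrs_swap[OF fin])
  also have "\<dots> = C" unfolding C_def by (simp add: mult.commute)
  finally have "Im (cnj C) = Im C" by simp
  then have Im_C: "Im C = 0" by simp
  have norm_term: "cnj (f w) * (k * f w) = k * of_real ((cmod (f w))\<^sup>2)" for w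
    by (simp only: complex_norm_square) (simp add: mult_ac)
  have "k * of_real T = (\<Sum>w\<in>verts G. cnj (f w) * (k * f w))"
    unfolding T_def of_real_sum sum_distrib_left norm_term ..
  also have "\<dots> = (\<Sum>w\<in>verts G. cnj (f w) * (of_nat (deg G w) * f w + (\<Sum>u\<in>nbrs G w. f u)))"
    using ev by (intro sum.cong) (auto simp: Q_eigenfunction_def)
  also have "\<dots> = (\<Sum>w\<in>verts G. of_nat (deg G w) * (f w * cnj (f w))) + C"
    unfolding C_def by (simp add: sum.distrib distrib_left sum_distrib_left mult_ac)
  finally have "Im (k * of_real T) = 0"
    using Im_C by (simp add: Im_sum)
  then show ?thesis using T_pos by simp
qed

lemma Q_eigenvalue_Re_if_complex_Q_eigenfunction:
  fixes f :: "'a \<Rightarrow> complex"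
  assumes s: "simple_graph G" and ev: "Q_eigenfunction G k f"
  shows "Q_eigenvalue G (Re k)"
proof -
  have k: "k = of_real (Re k)" using complex_Q_eigenvalue_real[OF s ev] complex_eqI by auto
  have eq: "\<forall>w\<in>verts G. real (deg G w) * Re (f w) + (\<Sum>u\<in>nbrs G w. Re (f u)) = Re k * Re (f w)
      \<and> real (deg G w) * Im (f w) + (\<Sum>u\<in>nbrs G w. Im (f u)) = Re k * Im (f w)"
  proof
    fix w assume "w \<in> verts G"
    then have "of_nat (deg G w) * f w + (\<Sum>u\<in>nbrs G w. f u) = of_real (Re k) * f w"
      using ev k by (simp add: Q_eigenfunction_def)
    then have "Re (of_nat (deg G w) * f w + (\<Sum>u\<in>nbrs G w. f u)) = Re (of_real (Re k) * f w)"
      "Im (of_nat (deg G w) * f w + (\<Sum>u\<in>nbrs G w. f u)) = Im (of_real (Re k) * f w)"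
      by simp_all
    then show "real (deg G w) * Re (f w) + (\<Sum>u\<in>nbrs G w. Re (f u)) = Re k * Re (f w)
      \<and> real (deg G w) * Im (f w) + (\<Sum>u\<in>nbrs G w. Im (f u)) = Re k * Im (f w)"
      by (simp add: Re_sum Im_sum)
  qed
  obtain w where w: "w \<in> verts G" and nz: "Re (f w) \<noteq> 0 \<or> Im (f w) \<noteq> 0"
    using ev complex_eqI by (force simp: Q_eigenfunction_def)
  from nz show ?thesis
  proof
    assume "Re (f w) \<noteq> 0"
    then show ?thesis unfolding Q_eigenvalue_def
      by (intro exI[of _ "\<lambda>w. Re (f w)"]) (use w(1) eq in auto)
  next
    assume "Im (f w) \<noteq> 0"
    then show ?thesis unfolding Q_eigenvalue_def
      by (intro exI[of _ "\<lambda>w. Im (f w)"]) (use w(1) eq in auto)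
  qed
qed

lemma finite_Q_eigenvalues:
  assumes s: "simple_graph G"
  shows "finite {\<mu>. Q_eigenvalue G \<mu>}"
proof -
  obtain h where h: "bij_betw h {0..<card (verts G)} (verts G)"
    using ex_bij_betw_nat_finite[OF finite_verts[OF s]] by blast
  have "{\<mu>. Q_eigenvalue G \<mu>} \<subseteq> spectrum (Q_mat G h (card (verts G)) :: real mat)"
  proof
    fix \<mu> assume "\<mu> \<in> {\<mu>. Q_eigenvalue G \<mu>}"
    then obtain x where "Q_eigenfunction G \<mu> x" by (auto simp: Q_eigenvalue_iff)
    then have "eigenvector (Q_mat G h (card (verts G))) (vec (card (verts G)) (\<lambda>j. x (h j))) \<mu>"
      using eigenvector_Q_mat_iff[OF s h] by blast
    then show "\<mu> \<in> spectrum (Q_mat G h (card (verts G)) :: real mat)"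
      by (auto simp: spectrum_def eigenvalue_def)
  qed
  then show ?thesis
    using card_finite_spectrum(1)[OF Q_mat_carrier] finite_subset by blast
qed

lemma Q_eigenvalue_exists:
  assumes s: "simple_graph G" and ne: "verts G \<noteq> {}"
  shows "\<exists>\<mu>. Q_eigenvalue G \<mu>"
proof -
  define n where "n = card (verts G)"
  have "n > 0" using finite_verts[OF s] ne unfolding n_def by (simp add: card_gt_0_iff)
  obtain h where h: "bij_betw h {0..<n} (verts G)"
    using ex_bij_betw_nat_finite[OF finite_verts[OF s]] unfolding n_def by blast
  obtain k where "eigenvalue (Q_mat G h n :: complex mat) k"
    using spectrum_non_empty[OF Q_mat_carrier \<open>n > 0\<close>] unfolding spectrum_def by blast
  then obtain z where "eigenvector (Q_mat G h n :: complex mat) z k" unfolding eigenvalue_def by blast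
  then show ?thesis
    using Q_eigenvalue_Re_if_complex_Q_eigenfunction[OF s] eigenvector_Q_mat_imp_Q_eigenfunction[OF s h]
    by blast
qed

lemma signless_q_le:
  assumes "simple_graph G" "verts G \<noteq> {}" "\<And>\<mu>. Q_eigenvalue G \<mu> \<Longrightarrow> \<mu> \<le> c"
  shows "signless_q G \<le> c"
proof -
  have "finite {\<mu>. Q_eigenvalue G \<mu>}" "{\<mu>. Q_eigenvalue G \<mu>} \<noteq> {}"
    using finite_Q_eigenvalues[OF assms(1)] Q_eigenvalue_exists[OF assms(1,2)] by auto
  then show ?thesis unfolding signless_q_def using assms(3) by (simp add: Max_le_iff)
qed

section \<open>Minors\<close>

lemma minor_steps_delete_edges:
  assumes "finite F" "F \<subseteq> edges G"
  shows "minor_step\<^sup>*\<^sup>* G (verts G, edges G - F)"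
  using assms
proof (induction F rule: finite_induct)
  case empty
  then show ?case by (simp add: verts_def edges_def)
next
  case (insert e F)
  have "minor_step (verts G, edges G - F)
      (verts (verts G, edges G - F), edges (verts G, edges G - F) - {e})"
    by (rule minor_step.del_edge) (use insert in \<open>simp add: edges_def\<close>)
  moreover have "edges (verts G, edges G - F) - {e} = edges G - insert e F"
    by (auto simp: edges_def)
  ultimately have "minor_step (verts G, edges G - F) (verts G, edges G - insert e F)"
    by (simp add: verts_def)
  moreover have "minor_step\<^sup>*\<^sup>* G (verts G, edges G - F)" using insert by simp
  ultimately show ?case by (simp add: rtranclp.rtrancl_into_rtrancl)
qed

lemma minor_steps_delete_isolated_verts:
  assumes "finite X" "X \<subseteq> verts G" "\<forall>e\<in>edges G. e \<inter> X = {}"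
  shows "minor_step\<^sup>*\<^sup>* G (verts G - X, edges G)"
  using assms
proof (induction X rule: finite_induct)
  case empty
  then show ?case by (simp add: verts_def edges_def)
next
  case (insert x X)
  have "minor_step (verts G - X, edges G)
      (verts (verts G - X, edges G) - {x}, {e \<in> edges (verts G - X, edges G). x \<notin> e})"
    by (rule minor_step.del_vertex) (use insert in \<open>simp add: verts_def\<close>)
  moreover have "verts (verts G - X, edges G) - {x} = verts G - insert x X"
    by (auto simp: verts_def)
  moreover have "{e \<in> edges (verts G - X, edges G). x \<notin> e} = edges G"
    using insert.prems by (auto simp: edges_def)
  ultimately have "minor_step (verts G - X, edges G) (verts G - insert x X, edges G)"
    by simp
  moreover have "minor_step\<^sup>*\<^sup>* G (verts G - X, edges G)" using insert by simp
  ultimately show ?case by (simp add: rtranclp.rtrancl_into_rtrancl)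
qed

lemma subgraph_minor_steps:
  assumes s: "simple_graph G" and "S \<subseteq> verts G" "F \<subseteq> edges G" "\<And>e. e \<in> F \<Longrightarrow> e \<subseteq> S"
  shows "minor_step\<^sup>*\<^sup>* G (S, F)"
proof -
  have "minor_step\<^sup>*\<^sup>* G (verts G, edges G - (edges G - F))"
    using finite_edges[OF s] by (intro minor_steps_delete_edges) auto
  moreover have "edges G - (edges G - F) = F" using assms(3) by blast
  moreover have "minor_step\<^sup>*\<^sup>* (verts G, F) (verts G - (verts G - S), F)"
    using minor_steps_delete_isolated_verts[of "verts G - S" "(verts G, F)"]
      finite_verts[OF s] assms(4) by (auto simp: verts_def edges_def)
  moreover have "verts G - (verts G - S) = S" using assms(2) by blast
  ultimately show ?thesis by simp
qed

lemma K33_edge_iff: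
  "{i, j} \<in> edges K33 \<longleftrightarrow> (i < 3 \<and> 3 \<le> j \<and> j \<le> 5) \<or> (j < 3 \<and> 3 \<le> i \<and> i \<le> (5::nat))"
  unfolding K33_def edges_def by (auto simp: doubleton_eq_iff)

lemma graph_iso_K33:
  assumes "distinct [a, b, c, x, y, z]"
  shows "graph_iso ({a, b, c, x, y, z}, {{p, q} | p q. p \<in> {a, b, c} \<and> q \<in> {x, y, z}}) K33"
proof -
  let ?S = "{a, b, c, x, y, z}"
  define f :: "_ \<Rightarrow> nat" where "f w = (if w = a then 0 else if w = b then 1 else if w = c then 2
      else if w = x then 3 else if w = y then 4 else 5)" for w
  have vals: "f a = 0" "f b = 1" "f c = 2" "f x = 3" "f y = 4" "f z = 5"
    using assms unfolding f_def by auto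
  have left: "p \<in> {a, b, c} \<longleftrightarrow> f p < 3" and right: "p \<in> {x, y, z} \<longleftrightarrow> 3 \<le> f p \<and> f p \<le> 5"
    if "p \<in> ?S" for p
    using that vals assms by auto
  have img: "f ` ?S = {0..5}"
  proof -
    have "f ` ?S = {0, 1, 2, 3, 4, 5}" by (simp add: vals)
    also have "\<dots> = {0..5}" by auto
    finally show ?thesis .
  qed
  have "card ?S = 6" using distinct_card[OF assms] by simp
  then have "inj_on f ?S" using img by (intro eq_card_imp_inj_on) auto
  with img have "bij_betw f ?S (verts K33)" by (simp add: bij_betw_def verts_def K33_def)
  moreover have "{p, q} \<in> {{p, q} | p q. p \<in> {a, b, c} \<and> q \<in> {x, y, z}} \<longleftrightarrow> {f p, f q} \<in> edges K33"
    if "p \<in> ?S" "q \<in> ?S" for p q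
    unfolding K33_edge_iff using left[OF that(1)] left[OF that(2)] right[OF that(1)] right[OF that(2)]
    by (auto simp: doubleton_eq_iff)
  ultimately show ?thesis unfolding graph_iso_def by (auto simp: verts_def edges_def)
qed

lemma card_common_nbrs_le_2:
  assumes s: "simple_graph G" and K33_free: "minor_free G K33"
    and abc: "a \<in> verts G" "b \<in> verts G" "c \<in> verts G" "distinct [a, b, c]"
  shows "card (nbrs G a \<inter> nbrs G b \<inter> nbrs G c) \<le> 2"
proof (rule ccontr)
  assume "\<not> ?thesis"
  then have "3 \<le> card (nbrs G a \<inter> nbrs G b \<inter> nbrs G c)" by simp
  then obtain T where T: "T \<subseteq> nbrs G a \<inter> nbrs G b \<inter> nbrs G c" "card T = 3"
    by (rule obtain_subset_with_card_n)
  then obtain x y z where xyz: "T = {x, y, z}" "distinct [x, y, z]"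
    unfolding card_3_iff by auto
  have dist: "distinct [a, b, c, x, y, z]"
    using abc T xyz not_in_own_nbrs[OF s] by auto
  have "minor_step\<^sup>*\<^sup>* G ({a, b, c, x, y, z}, {{p, q} | p q. p \<in> {a, b, c} \<and> q \<in> {x, y, z}})"
    using abc T xyz by (intro subgraph_minor_steps[OF s]) (auto simp: nbrs_def)
  then have "has_minor G K33" unfolding has_minor_def using graph_iso_K33[OF dist] by blast
  with K33_free show False unfolding minor_free_def by blast
qed

lemma sum_card_le_card_UN_add_card_Int:
  assumes "finite I" "\<And>i. i \<in> I \<Longrightarrow> finite (A i)"
  shows "(\<Sum>i\<in>I. card (A i)) \<le> card (\<Union>i\<in>I. A i) + (\<Sum>i\<in>I. \<Sum>j\<in>I - {i}. card (A i \<inter> A j))"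
  using assms
proof (induction I rule: finite_induct)
  case empty
  then show ?case by simp
next
  case (insert a I)
  define U where "U = (\<Union>i\<in>I. A i)"
  have IH: "(\<Sum>i\<in>I. card (A i)) \<le> card U + (\<Sum>i\<in>I. \<Sum>j\<in>I - {i}. card (A i \<inter> A j))"
    using insert unfolding U_def by blast
  have "card (A a) + card U = card (A a \<union> U) + card (A a \<inter> U)"
    using insert unfolding U_def by (intro card_Un_Int) auto
  moreover have "card (A a \<inter> U) \<le> (\<Sum>j\<in>I. card (A a \<inter> A j))"
  proof -
    have "A a \<inter> U = (\<Union>j\<in>I. A a \<inter> A j)" unfolding U_def by blast
    then show ?thesis using card_UN_le[OF insert(1), of "\<lambda>j. A a \<inter> A j"] by simp
  qed
  moreover have "(\<Sum>i\<in>I. \<Sum>j\<in>I - {i}. card (A i \<inter> A j))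
      \<le> (\<Sum>i\<in>I. \<Sum>j\<in>insert a I - {i}. card (A i \<inter> A j))"
    using insert(1) by (intro sum_mono sum_mono2) auto
  moreover have "insert a I - {a} = I" using insert(2) by blast
  ultimately show ?case using IH insert(1,2) unfolding U_def by simp
qed

lemma sum_weights_indicator:
  assumes "finite S"
  shows "(\<Sum>w\<in>S. if w \<in> B then c else 1) = real (card S) + (c - 1) * real (card (S \<inter> B))"
proof -
  have "(\<Sum>w\<in>S. if w \<in> B then c else 1) = (\<Sum>w\<in>S. 1 + (if w \<in> B then c - 1 else 0))"
    by (rule sum.cong) auto
  also have "\<dots> = real (card S) + (\<Sum>w\<in>S. if w \<in> B then c - 1 else 0)"
    by (simp add: sum.distrib)
  also have "(\<Sum>w\<in>S. if w \<in> B then c - 1 else 0) = (\<Sum>w\<in>S \<inter> B. c - 1)"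
    by (rule sum.inter_restrict[OF assms, symmetric])
  finally show ?thesis by (simp add: mult.commute)
qed

section \<open>Graphs with a dominating vertex\<close>

locale apex_graph =
  fixes G :: "'a graph" and v :: 'a
  assumes simple: "simple_graph G"
    and apex: "v \<in> verts G"
    and nbrs_apex: "nbrs G v = verts G - {v}"
begin

lemma apex_in_nbrs: "w \<in> verts G - {v} \<Longrightarrow> v \<in> nbrs G w"
  using nbrs_sym[of w G v] nbrs_apex apex by blast

lemma card_verts_minus_apex: "card (verts G - {v}) = card (verts G) - 1"
  using apex finite_verts[OF simple] by simp

text \<open>Giving v one third of the total weight P of the other vertices makes the row of v in
Q p equal to (n - 1) P/3 + P = (n + 2) P/3, so only the rows of the other vertices need checking.\<close>
lemma Q_eigenvalue_le_by_apex_weight: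
  assumes ne: "verts G - {v} \<noteq> {}"
    and q_pos: "\<And>w. w \<in> verts G - {v} \<Longrightarrow> q w > 0"
    and row: "\<And>w. w \<in> verts G - {v} \<Longrightarrow>
      real (deg G w) * q w + (\<Sum>u\<in>verts G - {v}. q u) / 3 + (\<Sum>u\<in>nbrs G w - {v}. q u)
        \<le> (real (card (verts G)) + 2) * q w"
    and ev: "Q_eigenvalue G \<mu>"
  shows "\<mu> \<le> real (card (verts G)) + 2"
proof -
  have fin: "finite (verts G)" using simple finite_verts by blast
  define P where "P = (\<Sum>u\<in>verts G - {v}. q u)"
  have P_pos: "P > 0" unfolding P_def using fin ne q_pos by (intro sum_pos) auto
  define p where "p = q(v := P / 3)"
  show ?thesis
  proof (rule Q_eigenvalue_le_weighted_row_sum[OF fin ev, of p])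
    fix w assume "w \<in> verts G"
    then show "p w > 0" using P_pos q_pos unfolding p_def by auto
  next
    fix w assume w: "w \<in> verts G"
    show "real (deg G w) * p w + (\<Sum>u\<in>nbrs G w. p u) \<le> (real (card (verts G)) + 2) * p w"
    proof (cases "w = v")
      case True
      have "card (verts G) = Suc (deg G v)"
        unfolding deg_def nbrs_apex by (rule card_Suc_Diff1[OF fin apex, symmetric])
      then have "real (deg G v) * (P / 3) + P = (real (card (verts G)) + 2) * (P / 3)"
        by (simp add: algebra_simps)
      moreover have "(\<Sum>u\<in>nbrs G v. p u) = P" unfolding nbrs_apex P_def p_def by (rule sum.cong) auto
      ultimately show ?thesis using True unfolding p_def by simp
    next
      case False
      then have wv: "w \<in> verts G - {v}" using w by blast
      have "(\<Sum>u\<in>nbrs G w. p u) = p v + (\<Sum>u\<in>nbrs G w - {v}. p u)"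
        by (rule sum.remove[OF finite_nbrs[OF simple] apex_in_nbrs[OF wv]])
      also have "(\<Sum>u\<in>nbrs G w - {v}. p u) = (\<Sum>u\<in>nbrs G w - {v}. q u)"
        unfolding p_def by (rule sum.cong) auto
      finally show ?thesis using row[OF wv] False unfolding P_def p_def by simp
    qed
  qed
qed

lemma Q_eigenvalue_le_by_set_weight:
  fixes c :: real
  assumes ne: "verts G - {v} \<noteq> {}" and B: "B \<subseteq> verts G - {v}" and c: "1 \<le> c"
    and row: "\<And>w. w \<in> verts G - {v} \<Longrightarrow>
      real (deg G w) * (if w \<in> B then c else 1)
        + (real (card (verts G)) - 1 + (c - 1) * real (card B)) / 3
        + (real (deg G w) - 1 + (c - 1) * real (card (nbrs G w \<inter> B)))
      \<le> (real (card (verts G)) + 2) * (if w \<in> B then c else 1)"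
    and ev: "Q_eigenvalue G \<mu>"
  shows "\<mu> \<le> real (card (verts G)) + 2"
proof (rule Q_eigenvalue_le_by_apex_weight[where q = "\<lambda>w. if w \<in> B then c else 1", OF ne _ _ ev])
  have fin: "finite (verts G)" using simple finite_verts by blast
  show "\<And>w. w \<in> verts G - {v} \<Longrightarrow> 0 < (if w \<in> B then c else 1)" using c by auto
  fix w assume w: "w \<in> verts G - {v}"
  have "card (verts G) = Suc (card (verts G - {v}))" by (rule card_Suc_Diff1[OF fin apex, symmetric])
  moreover have "(verts G - {v}) \<inter> B = B" using B by blast
  ultimately have "(\<Sum>u\<in>verts G - {v}. if u \<in> B then c else 1)
      = real (card (verts G)) - 1 + (c - 1) * real (card B)"
    using sum_weights_indicator[of "verts G - {v}" B c] fin by simp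
  moreover have "deg G w = Suc (card (nbrs G w - {v}))"
    unfolding deg_def by (rule card_Suc_Diff1[OF finite_nbrs[OF simple] apex_in_nbrs[OF w], symmetric])
  moreover have "(nbrs G w - {v}) \<inter> B = nbrs G w \<inter> B" using B by blast
  ultimately show "real (deg G w) * (if w \<in> B then c else 1)
      + (\<Sum>u\<in>verts G - {v}. if u \<in> B then c else 1) / 3
      + (\<Sum>u\<in>nbrs G w - {v}. if u \<in> B then c else 1)
    \<le> (real (card (verts G)) + 2) * (if w \<in> B then c else 1)"
    using row[OF w] sum_weights_indicator[of "nbrs G w - {v}" B c] finite_nbrs[OF simple] by simp
qed

end

locale K33_free_apex_graph = apex_graph +
  assumes K33_free: "minor_free G K33"
begin

lemma card_common_nbrs_minus_apex_le_2:
  assumes "i \<in> verts G - {v}" "j \<in> verts G - {v}" "i \<noteq> j"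
  shows "card (nbrs G i \<inter> nbrs G j - {v}) \<le> 2"
proof -
  have "nbrs G i \<inter> nbrs G j - {v} \<subseteq> nbrs G i \<inter> nbrs G j \<inter> nbrs G v"
    using nbrs_apex nbrs_subset_verts[of G i] by blast
  then have "card (nbrs G i \<inter> nbrs G j - {v}) \<le> card (nbrs G i \<inter> nbrs G j \<inter> nbrs G v)"
    using finite_nbrs[OF simple] by (intro card_mono) auto
  also have "\<dots> \<le> 2"
    using assms apex by (intro card_common_nbrs_le_2[OF simple K33_free]) auto
  finally show ?thesis .
qed

lemma deg_add_deg_le:
  assumes i: "i \<in> verts G - {v}" and j: "j \<in> verts G - {v}" and "i \<noteq> j"
  shows "deg G i + deg G j \<le> card (verts G) + 3"
proof -
  have fin: "finite (verts G)" using simple finite_verts by blast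
  let ?C = "nbrs G i \<inter> nbrs G j - {v}"
  have "nbrs G i \<subseteq> {v} \<union> ?C \<union> (verts G - nbrs G j)"
    using nbrs_subset_verts[of G i] by blast
  then have "deg G i \<le> card ({v} \<union> ?C \<union> (verts G - nbrs G j))"
    unfolding deg_def using fin finite_nbrs[OF simple] by (intro card_mono) auto
  also have "\<dots> \<le> card ({v} \<union> ?C) + card (verts G - nbrs G j)" by (rule card_Un_le)
  also have "\<dots> \<le> 1 + card ?C + card (verts G - nbrs G j)"
    using card_Un_le[of "{v}" ?C] by simp
  finally have "deg G i \<le> 1 + card ?C + card (verts G - nbrs G j)" .
  moreover have "card ?C \<le> 2" using card_common_nbrs_minus_apex_le_2[OF assms] .
  moreover have "card (verts G - nbrs G j) = card (verts G) - deg G j"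
    unfolding deg_def by (rule card_Diff_subset[OF finite_nbrs[OF simple] nbrs_subset_verts])
  moreover have "deg G j \<le> card (verts G)" by (rule deg_le_card_verts[OF simple])
  ultimately show ?thesis by linarith
qed

lemma sum_card_nbrs_minus_apex_le:
  assumes I: "I \<subseteq> verts G - {v}"
  shows "(\<Sum>i\<in>I. card (nbrs G i - {v})) \<le> card (verts G) - 1 + 2 * card I * (card I - 1)"
proof -
  have fin_I: "finite I" using I finite_verts[OF simple] finite_subset by blast
  have "(\<Sum>i\<in>I. card (nbrs G i - {v})) \<le> card (\<Union>i\<in>I. nbrs G i - {v})
      + (\<Sum>i\<in>I. \<Sum>j\<in>I - {i}. card ((nbrs G i - {v}) \<inter> (nbrs G j - {v})))"
    using finite_nbrs[OF simple] fin_I by (intro sum_card_le_card_UN_add_card_Int) auto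
  moreover have "card (\<Union>i\<in>I. nbrs G i - {v}) \<le> card (verts G - {v})"
    using finite_verts[OF simple] nbrs_subset_verts[of G] by (intro card_mono) auto
  moreover have "(\<Sum>i\<in>I. \<Sum>j\<in>I - {i}. card ((nbrs G i - {v}) \<inter> (nbrs G j - {v})))
      \<le> (\<Sum>i\<in>I. \<Sum>j\<in>I - {i}. 2)"
  proof (intro sum_mono)
    fix i j assume "i \<in> I" "j \<in> I - {i}"
    moreover have "(nbrs G i - {v}) \<inter> (nbrs G j - {v}) = nbrs G i \<inter> nbrs G j - {v}" by blast
    ultimately show "card ((nbrs G i - {v}) \<inter> (nbrs G j - {v})) \<le> 2"
      using I card_common_nbrs_minus_apex_le_2[of i j] by auto
  qed
  moreover have "(\<Sum>i\<in>I. \<Sum>j\<in>I - {i}. 2) = 2 * card I * (card I - 1)"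
    using fin_I by (simp add: card_Diff_singleton)
  ultimately show ?thesis using card_verts_minus_apex by linarith
qed

text \<open>Five such vertices would have neighbourhoods (without v) of total size above 5(n - 3)/4
but pairwise intersections of size at most two, which is impossible in n - 1 vertices.\<close>
lemma card_large_deg_le_4:
  assumes n: "172 \<le> card (verts G)"
  shows "card {w \<in> verts G - {v}. card (verts G) < 4 * deg G w} \<le> 4"
proof (rule ccontr)
  define N where "N = card (verts G)"
  assume "\<not> ?thesis"
  then have "5 \<le> card {w \<in> verts G - {v}. N < 4 * deg G w}" unfolding N_def by simp
  then obtain I where I: "I \<subseteq> {w \<in> verts G - {v}. N < 4 * deg G w}" "card I = 5"
    by (rule obtain_subset_with_card_n)
  have "N - 3 \<le> 4 * card (nbrs G i - {v})" if "i \<in> I" for i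
  proof -
    have i: "i \<in> verts G - {v}" "N < 4 * deg G i" using that I(1) by auto
    have "card (nbrs G i - {v}) = deg G i - 1"
      unfolding deg_def using apex_in_nbrs[OF i(1)] finite_nbrs[OF simple] by simp
    then show ?thesis using i(2) by linarith
  qed
  then have "(\<Sum>i\<in>I. N - 3) \<le> (\<Sum>i\<in>I. 4 * card (nbrs G i - {v}))" by (rule sum_mono)
  then have "5 * (N - 3) \<le> 4 * (\<Sum>i\<in>I. card (nbrs G i - {v}))" using I(2) by (simp add: sum_distrib_left)
  moreover have "(\<Sum>i\<in>I. card (nbrs G i - {v})) \<le> N - 1 + 40"
    using sum_card_nbrs_minus_apex_le[of I] I unfolding N_def by auto
  ultimately show False using n unfolding N_def by linarith
qed

lemma Q_eigenvalue_le_if_large_deg_vertex: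
  assumes n: "88 \<le> card (verts G)"
    and deg_le: "\<And>w. w \<in> verts G - {v} \<Longrightarrow> deg G w \<le> card (verts G) - 2"
    and u: "u \<in> verts G - {v}" and large: "11 * card (verts G) \<le> 12 * deg G u"
    and ev: "Q_eigenvalue G \<mu>"
  shows "\<mu> \<le> real (card (verts G)) + 2"
proof -
  define N where "N = real (card (verts G))"
  define c where "c = 4 * N / 11"
  have c_ge_1: "1 \<le> c" using n unfolding c_def N_def by simp
  show ?thesis
  proof (rule Q_eigenvalue_le_by_set_weight[where B = "{u}", OF _ _ c_ge_1 _ ev])
    show "verts G - {v} \<noteq> {}" "{u} \<subseteq> verts G - {v}" using u by auto
  next
    fix w assume w: "w \<in> verts G - {v}"
    have "real (deg G w) \<le> real (card (verts G) - 2)" using deg_le[OF w] by simp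
    then have d_le: "real (deg G w) \<le> N - 2" using n unfolding N_def by (simp add: of_nat_diff)
    show "real (deg G w) * (if w \<in> {u} then c else 1)
        + (real (card (verts G)) - 1 + (c - 1) * real (card {u})) / 3
        + (real (deg G w) - 1 + (c - 1) * real (card (nbrs G w \<inter> {u})))
      \<le> (real (card (verts G)) + 2) * (if w \<in> {u} then c else 1)"
    proof (cases "w = u")
      case True
      have "nbrs G w \<inter> {u} = {}" using True not_in_own_nbrs[OF simple, of u] by blast
      moreover have "(N - 2 + c) / 3 + real (deg G w) - 1 \<le> 4 * c"
        using d_le unfolding c_def by (simp add: field_simps)
      moreover have "(real (deg G w) + 4) * c \<le> (N + 2) * c"
        using d_le c_ge_1 by (intro mult_right_mono) auto
      ultimately show ?thesis using True unfolding N_def[symmetric] by (simp add: distrib_right) argo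
    next
      case False
      have "deg G w + deg G u \<le> card (verts G) + 3" using w u False by (intro deg_add_deg_le)
      then have "12 * real (deg G w) \<le> N + 36" using large unfolding N_def by simp
      moreover have "(c - 1) * real (card (nbrs G w \<inter> {u})) \<le> c - 1"
        using c_ge_1 by (intro mult_left_le) (auto simp: card_le_Suc0_iff_eq)
      moreover have "88 \<le> N" using n unfolding N_def by simp
      moreover have "card {u} = 1" by simp
      ultimately show ?thesis using False c_def unfolding N_def[symmetric]
        by (simp only: singleton_iff if_False of_nat_1) argo
    qed
  qed
qed

lemma Q_eigenvalue_le_if_no_large_deg_vertex:
  assumes n: "492 \<le> card (verts G)"
    and small: "\<And>w. w \<in> verts G - {v} \<Longrightarrow> 12 * deg G w < 11 * card (verts G)"
    and ev: "Q_eigenvalue G \<mu>"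
  shows "\<mu> \<le> real (card (verts G)) + 2"
proof -
  define N where "N = real (card (verts G))"
  define B where "B = {w \<in> verts G - {v}. card (verts G) < 4 * deg G w}"
  have card_B: "card B \<le> 4" unfolding B_def using card_large_deg_le_4 n by simp
  have fin_B: "finite B" unfolding B_def using finite_verts[OF simple] by simp
  show ?thesis
  proof (rule Q_eigenvalue_le_by_set_weight[where B = B and c = 17, OF _ _ _ _ ev])
    have "card (verts G - {v}) \<noteq> 0" using n card_verts_minus_apex by simp
    then show "verts G - {v} \<noteq> {}" by (metis card.empty)
    show "B \<subseteq> verts G - {v}" "(1::real) \<le> 17" unfolding B_def by auto
  next
    fix w assume w: "w \<in> verts G - {v}"
    have "card (nbrs G w \<inter> B) \<le> card B" using fin_B by (intro card_mono) auto
    then have "real (card (nbrs G w \<inter> B)) \<le> 4" "real (card B) \<le> 4" using card_B by simp_all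
    moreover have "12 * real (deg G w) \<le> 11 * N" using small[OF w] unfolding N_def by linarith
    moreover have "w \<notin> B \<Longrightarrow> 4 * real (deg G w) \<le> N" using w unfolding B_def N_def by auto
    moreover have "492 \<le> N" using n unfolding N_def by simp
    ultimately show "real (deg G w) * (if w \<in> B then 17 else 1)
        + (real (card (verts G)) - 1 + (17 - 1) * real (card B)) / 3
        + (real (deg G w) - 1 + (17 - 1) * real (card (nbrs G w \<inter> B)))
      \<le> (real (card (verts G)) + 2) * (if w \<in> B then 17 else 1)"
      unfolding N_def[symmetric] by (cases "w \<in> B"; simp only: if_True if_False; argo)
  qed
qed

lemma Q_eigenvalue_le:
  assumes n: "492 \<le> card (verts G)"
    and deg_le: "\<And>w. w \<in> verts G - {v} \<Longrightarrow> deg G w \<le> card (verts G) - 2"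
    and ev: "Q_eigenvalue G \<mu>"
  shows "\<mu> \<le> real (card (verts G)) + 2"
proof (cases "\<exists>u\<in>verts G - {v}. 11 * card (verts G) \<le> 12 * deg G u")
  case True
  then obtain u where "u \<in> verts G - {v}" "11 * card (verts G) \<le> 12 * deg G u" by blast
  then show ?thesis using Q_eigenvalue_le_if_large_deg_vertex deg_le ev n by simp
next
  case False
  then show ?thesis using Q_eigenvalue_le_if_no_large_deg_vertex ev n by (simp add: not_le)
qed

end

lemma apex_graph_SOME_max_degree:
  assumes "simple_graph G" "verts G \<noteq> {}" "max_degree G = card (verts G) - 1"
  shows "apex_graph G (SOME v. v \<in> verts G \<and> deg G v = max_degree G)"
proof -
  define v where "v = (SOME v. v \<in> verts G \<and> deg G v = max_degree G)"
  have "v \<in> verts G \<and> deg G v = max_degree G"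
    unfolding v_def using max_degree_attained[OF finite_verts[OF assms(1)] assms(2)] by (rule someI_ex)
  then show ?thesis
    unfolding v_def[symmetric] using assms(1,3) nbrs_eq_if_deg_eq[OF assms(1)] by unfold_locales auto
qed

theorem lemma4p3:
  fixes G :: "'a graph"
  assumes "simple_graph G"
    and "edge_maximal_minor_free G K33"
    and "card (verts G) \<ge> 1186"
    and "max_degree G = card (verts G) - 1"
    and "second_max_degree G \<le> card (verts G) - 2"
  shows "signless_q G \<le> real (card (verts G)) + 2"
proof -
  have ne: "verts G \<noteq> {}" using assms(3) by auto
  define v where "v = (SOME v. v \<in> verts G \<and> deg G v = max_degree G)"
  interpret apex_graph G v
    unfolding v_def by (rule apex_graph_SOME_max_degree[OF assms(1) ne assms(4)])
  interpret K33_free_apex_graph G v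
    using assms(2) by unfold_locales (simp add: edge_maximal_minor_free_def)
  have "deg G w \<le> card (verts G) - 2" if "w \<in> verts G - {v}" for w
    using deg_le_second_max_degree[OF finite_verts[OF simple], of w] that assms(5)
    unfolding v_def by auto
  then show ?thesis
    using signless_q_le[OF simple ne] Q_eigenvalue_le assms(3) by simp
qed

end
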